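(* Let $(X_1,Y_1),\dots,(X_{n+1},Y_{n+1})$ be data with $L_i=\mathcal{L}(f,X_i,Y_i)\in[0,1]$, $s:\mathcal{X}\to[0,1]$ a score, $w:\mathcal{X}\to(0,\infty)$ a weight function, $\alpha,\gamma\in(0,1)$, and $E_{\gamma,n+1}$ the weighted e-value below. If $\gamma\le\alpha$, then $$\mathbf{1}\{E_{\gamma,n+1}\ge1/\alpha\}=\mathbf{1}\Big\{\frac{w(X_{n+1})+\sum_{i=1}^nw(X_i)L_i\mathbf{1}\{s(X_i)\le s(X_{n+1})\}}{\sum_{i=1}^{n+1}w(X_i)}\le\gamma\Big\}.$$ If $\gamma>\alpha$, then $E_{\gamma,n+1}\ge1/\alpha$ if and only if both $\frac{w(X_{n+1})+\sum_{i=1}^nw(X_i)L_i\mathbf{1}\{s(X_i)\le s(X_{n+1})\}}{\sum_{i=1}^{n+1}w(X_i)}\le\gamma$ and, for all $t\in\mathcal{M}$ and $\ell\in[0,1]$, $\frac{\ell w(X_{n+1})+\sum_{i=1}^nw(X_i)L_i\mathbf{1}\{s(X_i)\le t\}}{\sum_{i=1}^{n+1}w(X_i)}\notin(\alpha,\gamma]$.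
   Context: Let $w_i=w(X_i)$, $\mathcal{M}=\{s(X_i)\}_{i=1}^{n+1}$, $F(t;\ell)=\frac{\sum_{i=1}^nw_iL_i\mathbf{1}\{s(X_i)\le t\}+w_{n+1}\ell\mathbf{1}\{s(X_{n+1})\le t\}}{\sum_{i=1}^{n+1}w_i}$, $t_\gamma(\ell)=\max\{t\in\mathcal{M}:F(t;\ell)\le\gamma\}$ ($\max\emptyset=-\infty$), and $E_{\gamma,n+1}=\inf_{\ell\in[0,1]}\frac{\mathbf{1}\{s(X_{n+1})\le t_\gamma(\ell)\}\sum_{i=1}^{n+1}w_i}{\sum_{i=1}^nw_iL_i\mathbf{1}\{s(X_i)\le t_\gamma(\ell)\}+w_{n+1}\ell\mathbf{1}\{s(X_{n+1})\le t_\gamma(\ell)\}}$, each ratio $0$ when its numerator is $0$ and $+\infty$ when the numerator is positive and the denominator $0$; $E_{\gamma,n+1}=0$ if $\inf_\ell t_\gamma(\ell)=-\infty$. *)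

theory Defs
  imports "HOL-Analysis.Analysis"
begin

text \<open>Data are indexed by 1..n+1; the test point is index n+1 (= Suc n).
  X :: nat => 'x are the covariates, L :: nat => real the losses,
  s the score, w the weight function.\<close>

definition wtot :: "nat \<Rightarrow> (nat \<Rightarrow> 'x) \<Rightarrow> ('x \<Rightarrow> real) \<Rightarrow> real" where
  "wtot n X w = (\<Sum>i=1..Suc n. w (X i))"

definition Fw :: "nat \<Rightarrow> (nat \<Rightarrow> 'x) \<Rightarrow> (nat \<Rightarrow> real) \<Rightarrow> ('x \<Rightarrow> real) \<Rightarrow> ('x \<Rightarrow> real)
                  \<Rightarrow> real \<Rightarrow> real \<Rightarrow> real" where
  "Fw n X L s w t l =
     ((\<Sum>i=1..n. w (X i) * L i * of_bool (s (X i) \<le> t))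
      + w (X (Suc n)) * l * of_bool (s (X (Suc n)) \<le> t)) / wtot n X w"

definition Mset :: "nat \<Rightarrow> (nat \<Rightarrow> 'x) \<Rightarrow> ('x \<Rightarrow> real) \<Rightarrow> real set" where
  "Mset n X s = (\<lambda>i. s (X i)) ` {1..Suc n}"

definition tgam :: "nat \<Rightarrow> (nat \<Rightarrow> 'x) \<Rightarrow> (nat \<Rightarrow> real) \<Rightarrow> ('x \<Rightarrow> real) \<Rightarrow> ('x \<Rightarrow> real)
                  \<Rightarrow> real \<Rightarrow> real \<Rightarrow> ereal" where
  "tgam n X L s w \<gamma> l =
     (let T = {t \<in> Mset n X s. Fw n X L s w t l \<le> \<gamma>}
      in if T = {} then -\<infinity> else ereal (Max T))"

definition eratio :: "real \<Rightarrow> real \<Rightarrow> ereal" where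
  "eratio a b = (if a = 0 then 0 else if b = 0 then \<infinity> else ereal (a / b))"

definition Enum :: "nat \<Rightarrow> (nat \<Rightarrow> 'x) \<Rightarrow> (nat \<Rightarrow> real) \<Rightarrow> ('x \<Rightarrow> real) \<Rightarrow> ('x \<Rightarrow> real)
                  \<Rightarrow> real \<Rightarrow> real \<Rightarrow> real" where
  "Enum n X L s w \<gamma> l =
     of_bool (ereal (s (X (Suc n))) \<le> tgam n X L s w \<gamma> l) * wtot n X w"

definition Eden :: "nat \<Rightarrow> (nat \<Rightarrow> 'x) \<Rightarrow> (nat \<Rightarrow> real) \<Rightarrow> ('x \<Rightarrow> real) \<Rightarrow> ('x \<Rightarrow> real)
                  \<Rightarrow> real \<Rightarrow> real \<Rightarrow> real" where
  "Eden n X L s w \<gamma> l =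
     (\<Sum>i=1..n. w (X i) * L i * of_bool (ereal (s (X i)) \<le> tgam n X L s w \<gamma> l))
     + w (X (Suc n)) * l * of_bool (ereal (s (X (Suc n))) \<le> tgam n X L s w \<gamma> l)"

definition Eval :: "nat \<Rightarrow> (nat \<Rightarrow> 'x) \<Rightarrow> (nat \<Rightarrow> real) \<Rightarrow> ('x \<Rightarrow> real) \<Rightarrow> ('x \<Rightarrow> real)
                  \<Rightarrow> real \<Rightarrow> ereal" where
  "Eval n X L s w \<gamma> =
     (if (INF l\<in>{0..1}. tgam n X L s w \<gamma> l) = -\<infinity> then 0
      else (INF l\<in>{0..1}. eratio (Enum n X L s w \<gamma> l) (Eden n X L s w \<gamma> l)))"

end

theory Submission
  imports Defs
begin

text \<open>Everything is monotone: \<open>F(t;\<ell>)\<close> increases in \<open>t\<close> and in \<open>\<ell>\<close>, so \<open>t\<^sub>\<gamma>(\<ell>)\<close> decreases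
  in \<open>\<ell>\<close> and the infimum over \<open>\<ell> \<in> [0,1]\<close> of \<open>t\<^sub>\<gamma>(\<ell>)\<close> is \<open>t\<^sub>\<gamma>(1)\<close>. Each ratio in the
  infimum is \<open>1 / F(t\<^sub>\<gamma>(\<ell>);\<ell>)\<close> when the test score is at most \<open>t\<^sub>\<gamma>(\<ell>)\<close> and \<open>0\<close> otherwise.
  Hence \<open>E \<ge> 1/\<alpha>\<close> says that for every \<open>\<ell>\<close> the test score passes the threshold, which by
  monotonicity amounts to \<open>F(s(X\<^sub>n\<^sub>+\<^sub>1);1) \<le> \<gamma>\<close>, and that \<open>F(t\<^sub>\<gamma>(\<ell>);\<ell>) \<le> \<alpha>\<close>. As \<open>t\<^sub>\<gamma>(\<ell>)\<close>
  is the largest score with \<open>F \<le> \<gamma>\<close>, the latter fails exactly when some score \<open>t\<close> has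
  \<open>F(t;\<ell>) \<in> (\<alpha>,\<gamma>]\<close>; scores below the test score only give values below \<open>F(t\<^sub>\<gamma>(\<ell>);\<ell>)\<close>.
  For \<open>\<gamma> \<le> \<alpha>\<close> the interval is empty, so one criterion covers both cases.\<close>

locale weighted_scores =
  fixes n :: nat and X :: "nat \<Rightarrow> 'x" and L :: "nat \<Rightarrow> real"
    and s :: "'x \<Rightarrow> real" and w :: "'x \<Rightarrow> real"
  assumes L_nonneg: "\<And>i. i \<in> {1..n} \<Longrightarrow> 0 \<le> L i"
    and w_pos: "\<And>x. 0 < w x"
begin

abbreviation "S \<equiv> s (X (Suc n))"
abbreviation "W \<equiv> wtot n X w"
abbreviation "M \<equiv> Mset n X s"
abbreviation "F \<equiv> Fw n X L s w"
abbreviation "thr \<equiv> tgam n X L s w"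

definition lower_loss :: "real \<Rightarrow> real" where
  "lower_loss t = (\<Sum>i=1..n. w (X i) * L i * of_bool (s (X i) \<le> t))"

lemma wtot_pos: "0 < W"
  unfolding wtot_def using w_pos by (intro sum_pos) auto

lemma lower_loss_nonneg: "0 \<le> lower_loss t"
  unfolding lower_loss_def using L_nonneg w_pos by (intro sum_nonneg) (simp add: less_imp_le)

lemma lower_loss_mono:
  assumes "t1 \<le> t2"
  shows "lower_loss t1 \<le> lower_loss t2"
  unfolding lower_loss_def
proof (rule sum_mono)
  fix i assume "i \<in> {1..n}"
  then have "0 \<le> w (X i) * L i" using L_nonneg w_pos by (simp add: less_imp_le)
  then show "w (X i) * L i * of_bool (s (X i) \<le> t1) \<le> w (X i) * L i * of_bool (s (X i) \<le> t2)"
    using assms by auto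
qed

lemma Fw_eq: "F t l = (lower_loss t + w (X (Suc n)) * l * of_bool (S \<le> t)) / W"
  unfolding Fw_def lower_loss_def ..

lemma Fw_nonneg: "0 \<le> l \<Longrightarrow> 0 \<le> F t l"
  using wtot_pos w_pos lower_loss_nonneg[of t] by (simp add: Fw_eq less_imp_le)

lemma Fw_mono:
  assumes "t1 \<le> t2" "0 \<le> l1" "l1 \<le> l2"
  shows "F t1 l1 \<le> F t2 l2"
proof -
  have "w (X (Suc n)) * l1 * of_bool (S \<le> t1) \<le> w (X (Suc n)) * l2 * of_bool (S \<le> t2)"
    using assms w_pos[of "X (Suc n)"] by (auto intro: mult_left_mono)
  then show ?thesis
    using lower_loss_mono[OF assms(1)] wtot_pos
    unfolding Fw_eq by (intro divide_right_mono) auto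
qed

lemma thr_cases:
  obtains "thr \<gamma> l = -\<infinity>"
  | m where "thr \<gamma> l = ereal m" "m \<in> M" "F m l \<le> \<gamma>"
proof -
  define T where "T = {t \<in> M. F t l \<le> \<gamma>}"
  have "finite T" unfolding T_def Mset_def by auto
  then show ?thesis
    using that Max_in[of T] unfolding tgam_def T_def[symmetric] by (cases "T = {}") (auto simp: T_def)
qed

lemma ereal_le_thr_iff:
  assumes "t \<in> M" "0 \<le> l"
  shows "ereal t \<le> thr \<gamma> l \<longleftrightarrow> F t l \<le> \<gamma>"
proof
  assume "ereal t \<le> thr \<gamma> l"
  then obtain m where "thr \<gamma> l = ereal m" "F m l \<le> \<gamma>" "t \<le> m"
    by (cases rule: thr_cases[of \<gamma> l]) auto
  then show "F t l \<le> \<gamma>" using Fw_mono[of t m l l] assms(2) by simp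
next
  assume "F t l \<le> \<gamma>"
  moreover have "finite M" unfolding Mset_def by simp
  ultimately show "ereal t \<le> thr \<gamma> l"
    using assms(1) unfolding tgam_def by (auto intro: Max_ge)
qed

lemma thr_antimono:
  assumes "0 \<le> l1" "l1 \<le> l2"
  shows "thr \<gamma> l2 \<le> thr \<gamma> l1"
proof (cases rule: thr_cases[of \<gamma> l2])
  case (2 m)
  then have "F m l1 \<le> \<gamma>" using Fw_mono[of m m l1 l2] assms by simp
  then show ?thesis using 2 ereal_le_thr_iff assms(1) by simp
qed simp

lemma INF_thr: "(INF l\<in>{0..1}. thr \<gamma> l) = thr \<gamma> 1"
proof (rule antisym)
  show "(INF l\<in>{0..1}. thr \<gamma> l) \<le> thr \<gamma> 1" by (rule INF_lower) simp
  show "thr \<gamma> 1 \<le> (INF l\<in>{0..1}. thr \<gamma> l)" by (rule INF_greatest) (simp add: thr_antimono)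
qed

lemma evalue_ratio_ge_iff:
  assumes "0 \<le> l" "0 < \<alpha>"
  shows "ereal (1 / \<alpha>) \<le> eratio (Enum n X L s w \<gamma> l) (Eden n X L s w \<gamma> l)
    \<longleftrightarrow> (\<exists>m. thr \<gamma> l = ereal m \<and> S \<le> m \<and> F m l \<le> \<alpha>)"
proof (cases rule: thr_cases[of \<gamma> l])
  case 1
  then show ?thesis using assms(2) by (simp add: eratio_def Enum_def)
next
  case (2 m)
  show ?thesis
  proof (cases "S \<le> m")
    case True
    have Enum: "Enum n X L s w \<gamma> l = W" using 2 True by (simp add: Enum_def)
    have Eden: "Eden n X L s w \<gamma> l = W * F m l"
      using 2 wtot_pos by (simp add: Eden_def Fw_def)
    have "ereal (1 / \<alpha>) \<le> ereal (1 / F m l) \<longleftrightarrow> F m l \<le> \<alpha>" if "0 < F m l"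
      using that assms(2) by (simp add: field_simps)
    then show ?thesis
      using 2 True Fw_nonneg[OF assms(1), of m] wtot_pos assms(2)
      by (cases "F m l = 0") (auto simp: eratio_def Enum Eden)
  next
    case False
    then show ?thesis using 2 assms(2) by (simp add: eratio_def Enum_def)
  qed
qed

text \<open>The junk value \<open>0\<close> of \<open>E\<close> for \<open>t\<^sub>\<gamma> \<equiv> -\<infinity>\<close> is covered by the instance \<open>\<ell> = 1\<close>.\<close>

lemma Eval_ge_iff_thresholds:
  assumes "0 < \<alpha>"
  shows "ereal (1 / \<alpha>) \<le> Eval n X L s w \<gamma>
    \<longleftrightarrow> (\<forall>l\<in>{0..1}. \<exists>m. thr \<gamma> l = ereal m \<and> S \<le> m \<and> F m l \<le> \<alpha>)"
proof (cases "thr \<gamma> 1 = -\<infinity>")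
  case True
  then have "Eval n X L s w \<gamma> = 0" by (simp add: Eval_def INF_thr)
  moreover have "\<not> (\<exists>m. thr \<gamma> 1 = ereal m \<and> S \<le> m \<and> F m 1 \<le> \<alpha>)" using True by simp
  ultimately show ?thesis using assms by fastforce
next
  case False
  then show ?thesis
    using evalue_ratio_ge_iff[OF _ assms] by (simp add: Eval_def INF_thr le_INF_iff)
qed

lemma Eval_ge_iff:
  assumes "0 < \<alpha>"
  shows "ereal (1 / \<alpha>) \<le> Eval n X L s w \<gamma>
    \<longleftrightarrow> F S 1 \<le> \<gamma> \<and>
        (\<forall>t\<in>M. \<forall>l\<in>{0..1}. (l * w (X (Suc n)) + lower_loss t) / W \<notin> {\<alpha><..\<gamma>})"
    (is "_ \<longleftrightarrow> _ \<and> (\<forall>t\<in>M. \<forall>l\<in>{0..1}. ?G t l \<notin> _)")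
proof -
  have S_in_M: "S \<in> M" unfolding Mset_def by simp
  have G_eq: "?G t l = F t l" if "S \<le> t" for t l
    using that by (simp add: Fw_eq algebra_simps)
  have G_le: "?G t l \<le> F S l" if "t \<le> S" "0 \<le> l" for t l
    using that lower_loss_mono[of t S] wtot_pos by (simp add: Fw_eq divide_right_mono algebra_simps)
  have S_le_thr: "ereal S \<le> thr \<gamma> l \<longleftrightarrow> F S l \<le> \<gamma>" if "0 \<le> l" for l
    using ereal_le_thr_iff[OF S_in_M that] .
  show ?thesis
    unfolding Eval_ge_iff_thresholds[OF assms]
  proof (intro iffI conjI ballI notI)
    assume Q: "\<forall>l\<in>{0..1}. \<exists>m. thr \<gamma> l = ereal m \<and> S \<le> m \<and> F m l \<le> \<alpha>"
    then obtain m where "thr \<gamma> 1 = ereal m" "S \<le> m" by fastforce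
    then show "F S 1 \<le> \<gamma>" using S_le_thr[of 1] by simp
    fix t l assume t: "t \<in> M" and l: "l \<in> {0..1}" and G: "?G t l \<in> {\<alpha><..\<gamma>}"
    obtain m where m: "thr \<gamma> l = ereal m" "S \<le> m" "F m l \<le> \<alpha>" using Q l by blast
    show False
    proof (cases "S \<le> t")
      case True
      then have "F t l \<le> \<gamma>" using G G_eq by auto
      then have "ereal t \<le> thr \<gamma> l" using ereal_le_thr_iff[OF t] l by simp
      then have "t \<le> m" using m(1) by simp
      then show False using Fw_mono[of t m l l] G G_eq[OF True] l m(3) by auto
    next
      case False
      then show False using G_le[of t l] Fw_mono[of S m l l] G l m by auto
    qed
  next
    fix l :: real assume l: "l \<in> {0..1}"
    assume H: "F S 1 \<le> \<gamma> \<and> (\<forall>t\<in>M. \<forall>l\<in>{0..1}. ?G t l \<notin> {\<alpha><..\<gamma>})"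
    then have "ereal S \<le> thr \<gamma> l" using S_le_thr Fw_mono[of S S l 1] l by auto
    then obtain m where m: "thr \<gamma> l = ereal m" "m \<in> M" "F m l \<le> \<gamma>" "S \<le> m"
      by (cases rule: thr_cases[of \<gamma> l]) auto
    then have "F m l \<le> \<alpha>" using H l G_eq[of m l] by fastforce
    with m show "\<exists>m. thr \<gamma> l = ereal m \<and> S \<le> m \<and> F m l \<le> \<alpha>" by blast
  qed
qed

end

theorem propositionA1:
  fixes n :: nat and X :: "nat \<Rightarrow> 'x" and L :: "nat \<Rightarrow> real"
    and s :: "'x \<Rightarrow> real" and w :: "'x \<Rightarrow> real" and \<alpha> \<gamma> :: real
  assumes L01: "\<forall>i\<in>{1..Suc n}. 0 \<le> L i \<and> L i \<le> 1"
    and s01: "\<forall>x. 0 \<le> s x \<and> s x \<le> 1"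
    and wpos: "\<forall>x. 0 < w x"
    and alpha: "0 < \<alpha>" "\<alpha> < 1"
    and gamma: "0 < \<gamma>" "\<gamma> < 1"
  shows "(\<gamma> \<le> \<alpha> \<longrightarrow>
           ((ereal (1 / \<alpha>) \<le> Eval n X L s w \<gamma>) \<longleftrightarrow>
            (w (X (Suc n)) + (\<Sum>i=1..n. w (X i) * L i * of_bool (s (X i) \<le> s (X (Suc n)))))
              / (\<Sum>i=1..Suc n. w (X i)) \<le> \<gamma>))
       \<and> (\<alpha> < \<gamma> \<longrightarrow>
           ((ereal (1 / \<alpha>) \<le> Eval n X L s w \<gamma>) \<longleftrightarrow>
            ((w (X (Suc n)) + (\<Sum>i=1..n. w (X i) * L i * of_bool (s (X i) \<le> s (X (Suc n)))))
               / (\<Sum>i=1..Suc n. w (X i)) \<le> \<gamma>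
             \<and> (\<forall>t\<in>Mset n X s. \<forall>l\<in>{0..1::real}.
                  (l * w (X (Suc n)) + (\<Sum>i=1..n. w (X i) * L i * of_bool (s (X i) \<le> t)))
                    / (\<Sum>i=1..Suc n. w (X i)) \<notin> {\<alpha><..\<gamma>}))))"
proof -
  interpret weighted_scores n X L s w
    using L01 wpos by unfold_locales auto
  have "(w (X (Suc n)) + lower_loss (s (X (Suc n)))) / W = F (s (X (Suc n))) 1"
    by (simp add: Fw_eq)
  then show ?thesis
    using Eval_ge_iff[OF alpha(1), of \<gamma>]
    unfolding lower_loss_def[symmetric] wtot_def[symmetric] by auto
qed

end
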